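(* Let $J\ge2$, $\iota_1,\dots,\iota_J\in\{\pm1\}$ and distinct $z_1^*,\dots,z_J^*\in\mathbb{R}^N$. If $\#\{i:\iota_i=+1\}\le1$ or $\#\{i:\iota_i=-1\}\le1$, then the configuration $\{(\iota_1,z_1^* ),\dots,(\iota_J,z_J^* )\}$ is totally non-degenerate. In particular, any degenerate configuration has at least two positive signs and two negative signs, so $J\ge4$.
   Context: $N\ge7$. $A^*_{ij}=\mathbf 1_{i\ne j}\kappa_0\kappa_\infty\frac{\iota_i\iota_j}{|z_i^*-z_j^*|^{N-2}}$ with fixed positive constants $\kappa_0,\kappa_\infty$. A configuration (of size $\ge2$) is non-degenerate if $A^*$ has no nonzero kernel element in $[0,\infty)^J$, degenerate otherwise; it is totally non-degenerate if every sub-configuration $\{(\iota_i,z_i^* ):i\in\mathcal I\}$ with $|\mathcal I|\ge2$ is non-degenerate (with the corresponding submatrix of $A^*$). *)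

theory Defs
  imports "HOL-Analysis.Analysis"
begin

text \<open>Configurations are indexed by 0..<J: signs iota i (in {-1,1}) and points z i in R^N,
  where N = CARD('n).  The interaction matrix A* (zero on the diagonal).\<close>

definition Amat :: "real \<Rightarrow> real \<Rightarrow> (nat \<Rightarrow> real) \<Rightarrow> (nat \<Rightarrow> real ^ 'n) \<Rightarrow> nat \<Rightarrow> nat \<Rightarrow> real" where
  "Amat k0 kinf iota z i j =
     (if i \<noteq> j then k0 * kinf * (iota i * iota j) / (dist (z i) (z j)) ^ (CARD('n) - 2) else 0)"

definition nondegenerate_on :: "real \<Rightarrow> real \<Rightarrow> (nat \<Rightarrow> real) \<Rightarrow> (nat \<Rightarrow> real ^ 'n) \<Rightarrow> nat set \<Rightarrow> bool" where
  "nondegenerate_on k0 kinf iota z I \<longleftrightarrow>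
     \<not> (\<exists>x :: nat \<Rightarrow> real. (\<forall>i\<in>I. x i \<ge> 0) \<and> (\<exists>i\<in>I. x i \<noteq> 0) \<and>
          (\<forall>i\<in>I. (\<Sum>j\<in>I. Amat k0 kinf iota z i j * x j) = 0))"

definition totally_nondegenerate :: "real \<Rightarrow> real \<Rightarrow> (nat \<Rightarrow> real) \<Rightarrow> (nat \<Rightarrow> real ^ 'n) \<Rightarrow> nat \<Rightarrow> bool" where
  "totally_nondegenerate k0 kinf iota z J \<longleftrightarrow>
     (\<forall>I. I \<subseteq> {..<J} \<and> card I \<ge> 2 \<longrightarrow> nondegenerate_on k0 kinf iota z I)"

end

theory Submission
  imports Defs
begin

text \<open>Off the diagonal, \<open>A*\<^sub>i\<^sub>j\<close> is \<open>\<iota>\<^sub>i \<iota>\<^sub>j\<close> times a positive weight. If every sign except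
  possibly \<open>\<iota>\<^sub>q\<close> equals \<open>s\<close>, then row \<open>q\<close> of \<open>A*\<close> is sign-definite off the diagonal, so for a
  nonnegative kernel vector \<open>x\<close> that row forces \<open>x\<^sub>j = 0\<close> for all \<open>j \<noteq> q\<close>; any other row then
  reads \<open>A*\<^sub>i\<^sub>q x\<^sub>q = 0\<close> with \<open>A*\<^sub>i\<^sub>q \<noteq> 0\<close>, so \<open>x = 0\<close>. Sub-configurations inherit the sign
  condition.\<close>

lemma nonneg_kernel_zero_if_row_sign_definite:
  fixes M :: "'a \<Rightarrow> 'a \<Rightarrow> real"
  assumes fin: "finite I" and q: "q \<in> I" and i: "i \<in> I" "i \<noteq> q"
    and diag: "M q q = 0" and definite: "\<forall>j\<in>I - {q}. c * M q j > 0" and col: "M i q \<noteq> 0"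
    and nonneg: "\<forall>j\<in>I. x j \<ge> 0"
    and ker_q: "(\<Sum>j\<in>I. M q j * x j) = 0" and ker_i: "(\<Sum>j\<in>I. M i j * x j) = 0"
  shows "\<forall>j\<in>I. x j = 0"
proof -
  have "(\<Sum>j\<in>I. M q j * x j) = M q q * x q + (\<Sum>j\<in>I - {q}. M q j * x j)"
    using fin q by (rule sum.remove)
  with ker_q diag have "(\<Sum>j\<in>I - {q}. M q j * x j) = 0" by simp
  then have "(\<Sum>j\<in>I - {q}. c * M q j * x j) = 0"
    by (simp add: sum_distrib_left[symmetric] mult.assoc)
  then have off_q: "x j = 0" if j: "j \<in> I - {q}" for j
  proof -
    have "c * M q j * x j = 0"
      by (rule sum_nonneg_0[OF _ _ \<open>(\<Sum>j\<in>I - {q}. c * M q j * x j) = 0\<close> j])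
        (use fin definite nonneg in \<open>auto simp: less_imp_le\<close>)
    moreover have "c * M q j > 0" using definite j by blast
    ultimately show ?thesis by (metis less_irrefl mult_eq_0_iff)
  qed
  have "(\<Sum>j\<in>I. M i j * x j) = M i q * x q + (\<Sum>j\<in>I - {q}. M i j * x j)"
    using fin q by (simp add: sum.remove)
  also have "(\<Sum>j\<in>I - {q}. M i j * x j) = 0"
    using off_q by simp
  finally have "x q = 0" using ker_i col by simp
  with off_q show ?thesis by blast
qed

lemma Amat_off_diag_sign:
  fixes z :: "nat \<Rightarrow> real ^ 'n"
  assumes "k0 > 0" and "kinf > 0" and "z i \<noteq> z j" and "iota i \<noteq> 0" and "iota j \<noteq> 0"
  shows "iota i * iota j * Amat k0 kinf iota z i j > 0"
proof -
  define w where "w = k0 * kinf / dist (z i) (z j) ^ (CARD('n) - 2)"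
  have "i \<noteq> j" using assms(3) by blast
  then have "iota i * iota j * Amat k0 kinf iota z i j = (iota i * iota j)\<^sup>2 * w"
    by (simp add: Amat_def w_def power2_eq_square)
  moreover have "w > 0"
    using assms(1-3) by (simp add: w_def)
  ultimately show ?thesis
    using assms(4,5) by simp
qed

lemma nondegenerate_on_if_signs_agree_but_one:
  fixes z :: "nat \<Rightarrow> real ^ 'n"
  assumes fin: "finite I" and two: "card I \<ge> 2" and q: "q \<in> I"
    and signs: "\<forall>j\<in>I. iota j \<noteq> 0" and agree: "\<forall>j\<in>I - {q}. iota j = s"
    and inj: "inj_on z I" and "k0 > 0" and "kinf > 0"
  shows "nondegenerate_on k0 kinf iota z I"
  unfolding nondegenerate_on_def
proof (intro notI, elim exE conjE)
  fix x :: "nat \<Rightarrow> real"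
  assume nonneg: "\<forall>i\<in>I. x i \<ge> 0" and nonzero: "\<exists>i\<in>I. x i \<noteq> 0"
    and ker: "\<forall>i\<in>I. (\<Sum>j\<in>I. Amat k0 kinf iota z i j * x j) = 0"
  have "card (I - {q}) \<ge> 1" using fin two q by simp
  then obtain i where i: "i \<in> I" "i \<noteq> q"
    by (metis Diff_iff card.empty ex_in_conv insertI1 not_one_le_zero)
  have sign: "iota a * iota b * Amat k0 kinf iota z a b > 0"
    if "a \<in> I" "b \<in> I" "a \<noteq> b" for a b
    using Amat_off_diag_sign[of k0 kinf z a b iota] assms inj_onD[OF inj _ that(1,2)] signs that
    by auto
  have "\<forall>j\<in>I - {q}. iota q * s * Amat k0 kinf iota z q j > 0"
  proof
    fix j assume j: "j \<in> I - {q}"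
    then have "iota q * s = iota q * iota j" using agree by simp
    then show "iota q * s * Amat k0 kinf iota z q j > 0"
      using sign[of q j] q j by auto
  qed
  moreover have "Amat k0 kinf iota z i q \<noteq> 0"
    using sign[OF i(1) q i(2)] by auto
  moreover have "Amat k0 kinf iota z q q = 0"
    by (simp add: Amat_def)
  ultimately have "\<forall>j\<in>I. x j = 0"
    using nonneg_kernel_zero_if_row_sign_definite[OF fin q i, of "Amat k0 kinf iota z"]
      nonneg ker q i by blast
  with nonzero show False by blast
qed

lemma nondegenerate_on_if_minority_sign:
  fixes z :: "nat \<Rightarrow> real ^ 'n"
  assumes fin: "finite I" and two: "card I \<ge> 2"
    and signs: "\<forall>j\<in>I. iota j = 1 \<or> iota j = -1" and s: "s = 1 \<or> s = -1"
    and minority: "card {i\<in>I. iota i = s} \<le> 1"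
    and inj: "inj_on z I" and "k0 > 0" and "kinf > 0"
  shows "nondegenerate_on k0 kinf iota z I"
proof -
  have "finite {i\<in>I. iota i = s}" using fin by simp
  then have unique: "\<forall>a\<in>{i\<in>I. iota i = s}. \<forall>b\<in>{i\<in>I. iota i = s}. a = b"
    using minority card_le_Suc0_iff_eq by (metis One_nat_def)
  obtain q where q: "q \<in> I" and "\<forall>j\<in>I - {q}. iota j \<noteq> s"
  proof (cases "\<exists>q\<in>I. iota q = s")
    case True
    then obtain q where "q \<in> I" "iota q = s" by blast
    with unique that show ?thesis by blast
  next
    case False
    from two obtain q where "q \<in> I" by fastforce
    with False that show ?thesis by blast
  qed
  then have "\<forall>j\<in>I - {q}. iota j = - s" using signs s by auto
  moreover have "\<forall>j\<in>I. iota j \<noteq> 0" using signs by auto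
  ultimately show ?thesis
    using nondegenerate_on_if_signs_agree_but_one[OF fin two q] inj assms(7,8) by blast
qed

theorem lemma4p4:
  fixes k0 kinf :: real and iota :: "nat \<Rightarrow> real" and z :: "nat \<Rightarrow> real ^ 'n" and J :: nat
  assumes "CARD('n) \<ge> 7"
    and "k0 > 0" and "kinf > 0"
    and "J \<ge> 2"
    and "\<forall>i<J. iota i = 1 \<or> iota i = -1"
    and "inj_on z {..<J}"
  shows "(card {i. i < J \<and> iota i = 1} \<le> 1 \<or> card {i. i < J \<and> iota i = -1} \<le> 1
            \<longrightarrow> totally_nondegenerate k0 kinf iota z J)
       \<and> (\<not> nondegenerate_on k0 kinf iota z {..<J}
            \<longrightarrow> card {i. i < J \<and> iota i = 1} \<ge> 2 \<and> card {i. i < J \<and> iota i = -1} \<ge> 2 \<and> J \<ge> 4)"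
proof -
  let ?pos = "{i. i < J \<and> iota i = 1}" and ?neg = "{i. i < J \<and> iota i = -1}"
  have nondeg: "nondegenerate_on k0 kinf iota z I"
    if I: "I \<subseteq> {..<J}" "card I \<ge> 2" and minority: "card ?pos \<le> 1 \<or> card ?neg \<le> 1" for I
  proof -
    have "card {i\<in>I. iota i = s} \<le> card {i. i < J \<and> iota i = s}" for s
      by (rule card_mono) (use I in auto)
    moreover obtain s where "s = 1 \<or> s = -1" "card {i. i < J \<and> iota i = s} \<le> 1"
      using minority by blast
    ultimately have "s = 1 \<or> s = -1" "card {i\<in>I. iota i = s} \<le> 1"
      using le_trans by blast+
    moreover have "finite I" "inj_on z I" "\<forall>j\<in>I. iota j = 1 \<or> iota j = -1"
      using I(1) assms(5,6) finite_subset inj_on_subset by auto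
    ultimately show ?thesis
      using nondegenerate_on_if_minority_sign I(2) assms(2,3) by blast
  qed
  have "card ?pos + card ?neg = card (?pos \<union> ?neg)"
    by (rule card_Un_disjoint[symmetric]) auto
  also have "\<dots> \<le> J"
    using card_mono[of "{..<J}" "?pos \<union> ?neg"] by auto
  finally have "card ?pos + card ?neg \<le> J" .
  moreover have "\<not> (card ?pos \<le> 1 \<or> card ?neg \<le> 1)" if "\<not> nondegenerate_on k0 kinf iota z {..<J}"
    using nondeg[of "{..<J}"] that assms(4) by auto
  ultimately have "\<not> nondegenerate_on k0 kinf iota z {..<J}
      \<longrightarrow> card ?pos \<ge> 2 \<and> card ?neg \<ge> 2 \<and> J \<ge> 4"
    by linarith
  moreover have "card ?pos \<le> 1 \<or> card ?neg \<le> 1 \<longrightarrow> totally_nondegenerate k0 kinf iota z J"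
    using nondeg unfolding totally_nondegenerate_def by blast
  ultimately show ?thesis by blast
qed

end
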